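(* Let $G$ be any graph in the class $\mathcal{G}$ (defined in the context), and suppose $L(T_G^0)=L(T_G^1)=k+1$ for a positive integer $k$. Then for each vertex $V$ of $G$, the binary string $\phi_G(V)$ has length $2^{k+1-L(V)}$. In particular, $\phi_G(V_G^r)$ has length $2^k$.
   Context: $\mathcal{G}$ is the set of all finite graphs $G$ such that: (a) $G$ is directed and acyclic; (b) $G$ has a unique nonterminal vertex $V_G^r$ (the root) such that every other vertex is reachable from $V_G^r$ by a directed path; (c) $G$ has exactly two terminal vertices (vertices with no outgoing edges), denoted $T_G^0$ and $T_G^1$; (d) from each nonterminal vertex emanate exactly two edges, one labelled $0$ and one labelled $1$, terminating at different vertices; (e) each vertex $V$ carries a positive integer level $L(V)$ with $L(V_G^r)=1$, $L(T_G^0)=L(T_G^1)$, and levels strictly increasing along every directed path (not necessarily consecutively). For a binary string $y$ and positive integer $j$, $y^j$ denotes the concatenation of $j$ copies of $y$; juxtaposition denotes concatenation. The map $\phi_G$ from the vertex set of $G$ to the set of nonempty finite binary strings is defined by $\phi_G(T_G^0)=0$, $\phi_G(T_G^1)=1$, and for a nonterminal vertex $V$ whose $0$-edge leads to $V_0$ and whose $1$-edge leads to $V_1$, $\phi_G(V)=\phi_G(V_0)^{(2^{L(V_0)-L(V)-1})}\phi_G(V_1)^{(2^{L(V_1)-L(V)-1})}$. *)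

theory Defs
  imports Main
begin

text \<open>A graph in the class G is encoded by: a finite vertex set V, root r, terminal
vertices t0 and t1, successor functions e0 and e1 (the targets of the 0-edge and the
1-edge of a nonterminal vertex; their values at terminals are irrelevant), and a
level function L.\<close>

definition edges :: "'v set \<Rightarrow> 'v \<Rightarrow> 'v \<Rightarrow> ('v \<Rightarrow> 'v) \<Rightarrow> ('v \<Rightarrow> 'v) \<Rightarrow> ('v \<times> 'v) set" where
  "edges V t0 t1 e0 e1 = {(v, e0 v) | v. v \<in> V - {t0, t1}} \<union> {(v, e1 v) | v. v \<in> V - {t0, t1}}"

definition in_class_G ::
  "'v set \<Rightarrow> 'v \<Rightarrow> 'v \<Rightarrow> 'v \<Rightarrow> ('v \<Rightarrow> 'v) \<Rightarrow> ('v \<Rightarrow> 'v) \<Rightarrow> ('v \<Rightarrow> nat) \<Rightarrow> bool" where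
  "in_class_G V r t0 t1 e0 e1 L \<longleftrightarrow>
     finite V \<and> r \<in> V \<and> t0 \<in> V \<and> t1 \<in> V \<and> t0 \<noteq> t1 \<and> r \<noteq> t0 \<and> r \<noteq> t1 \<and>
     (\<forall>v \<in> V - {t0, t1}. e0 v \<in> V \<and> e1 v \<in> V \<and> e0 v \<noteq> e1 v) \<and>
     acyclic (edges V t0 t1 e0 e1) \<and>
     (\<forall>v \<in> V. (r, v) \<in> (edges V t0 t1 e0 e1)\<^sup>*) \<and>
     (\<forall>w \<in> V - {t0, t1}. (\<forall>v \<in> V. (w, v) \<in> (edges V t0 t1 e0 e1)\<^sup>*) \<longrightarrow> w = r) \<and>
     (\<forall>v \<in> V. 0 < L v) \<and> L r = 1 \<and> L t0 = L t1 \<and>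
     (\<forall>(u, w) \<in> edges V t0 t1 e0 e1. L u < L w)"

text \<open>phi with explicit recursion fuel; binary strings are bool lists (False = 0, True = 1).\<close>
fun phi_fuel :: "nat \<Rightarrow> 'v \<Rightarrow> 'v \<Rightarrow> ('v \<Rightarrow> 'v) \<Rightarrow> ('v \<Rightarrow> 'v) \<Rightarrow> ('v \<Rightarrow> nat) \<Rightarrow> 'v \<Rightarrow> bool list" where
  "phi_fuel 0 t0 t1 e0 e1 L v = []"
| "phi_fuel (Suc n) t0 t1 e0 e1 L v =
     (if v = t0 then [False] else if v = t1 then [True] else
        concat (replicate (2 ^ (L (e0 v) - L v - 1)) (phi_fuel n t0 t1 e0 e1 L (e0 v))) @
        concat (replicate (2 ^ (L (e1 v) - L v - 1)) (phi_fuel n t0 t1 e0 e1 L (e1 v))))"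

text \<open>Since the graph is acyclic, every directed path has fewer than card V edges,
so card V units of fuel suffice for the recursion to reach the terminals.\<close>
definition phi :: "'v set \<Rightarrow> 'v \<Rightarrow> 'v \<Rightarrow> ('v \<Rightarrow> 'v) \<Rightarrow> ('v \<Rightarrow> 'v) \<Rightarrow> ('v \<Rightarrow> nat) \<Rightarrow> 'v \<Rightarrow> bool list" where
  "phi V t0 t1 e0 e1 L v = phi_fuel (card V) t0 t1 e0 e1 L v"

end

theory Submission
  imports Defs
begin

text \<open>Since levels increase along edges and every path ends in a terminal of level \<open>k + 1\<close>,
all levels are at most \<open>k + 1\<close>. If the successors \<open>V\<^sub>i\<close> of a nonterminal \<open>V\<close> satisfy
\<open>|\<phi>(V\<^sub>i)| = 2^(k+1-L(V\<^sub>i))\<close>, then each of the two blocks of \<open>\<phi>(V)\<close> has length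
\<open>2^(L(V\<^sub>i)-L(V)-1) \<cdot> 2^(k+1-L(V\<^sub>i)) = 2^(k-L(V))\<close>, so \<open>|\<phi>(V)| = 2^(k+1-L(V))\<close>; the claim
follows by induction along the acyclic edge relation. The recursion fuel \<open>card V\<close> suffices
because each edge strictly shrinks the set of vertices reachable from its source.\<close>

lemma card_rtrancl_Image_less:
  assumes "finite (E\<^sup>* `` {v})" and "acyclic E" and "(v, w) \<in> E"
  shows "card (E\<^sup>* `` {w}) < card (E\<^sup>* `` {v})"
proof (rule psubset_card_mono[OF assms(1)])
  have "v \<notin> E\<^sup>* `` {w}"
  proof
    assume "v \<in> E\<^sup>* `` {w}"
    with assms(3) have "(v, v) \<in> E\<^sup>+" by (simp add: rtrancl_into_trancl2)
    with assms(2) show False by (simp add: acyclic_def)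
  qed
  moreover have "E\<^sup>* `` {w} \<subseteq> E\<^sup>* `` {v}"
    using assms(3) by (auto intro: converse_rtrancl_into_rtrancl)
  ultimately show "E\<^sup>* `` {w} \<subset> E\<^sup>* `` {v}" by blast
qed

lemma rtrancl_Image_subset_closed:
  assumes "E \<subseteq> V \<times> V" and "v \<in> V"
  shows "E\<^sup>* `` {v} \<subseteq> V"
proof -
  have "E\<^sup>* `` V = V" using assms(1) by (intro Image_closed_trancl) blast
  with assms(2) show ?thesis by blast
qed

lemma in_class_G_edges_subset:
  assumes "in_class_G V r t0 t1 e0 e1 L"
  shows "edges V t0 t1 e0 e1 \<subseteq> V \<times> V"
proof -
  have "\<forall>v \<in> V - {t0, t1}. e0 v \<in> V \<and> e1 v \<in> V \<and> e0 v \<noteq> e1 v"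
    using assms by (simp add: in_class_G_def)
  then show ?thesis by (auto simp: edges_def)
qed

lemma in_class_G_reachable_card_le:
  assumes "in_class_G V r t0 t1 e0 e1 L" and "v \<in> V"
  shows "card ((edges V t0 t1 e0 e1)\<^sup>* `` {v}) \<le> card V"
proof (rule card_mono)
  show "finite V" using assms(1) by (simp add: in_class_G_def)
  show "(edges V t0 t1 e0 e1)\<^sup>* `` {v} \<subseteq> V"
    using rtrancl_Image_subset_closed[OF in_class_G_edges_subset[OF assms(1)] assms(2)] .
qed

lemma in_class_G_reachable_finite:
  assumes "in_class_G V r t0 t1 e0 e1 L" and "v \<in> V"
  shows "finite ((edges V t0 t1 e0 e1)\<^sup>* `` {v})"
proof (rule finite_subset)
  show "finite V" using assms(1) by (simp add: in_class_G_def)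
  show "(edges V t0 t1 e0 e1)\<^sup>* `` {v} \<subseteq> V"
    using rtrancl_Image_subset_closed[OF in_class_G_edges_subset[OF assms(1)] assms(2)] .
qed

lemma in_class_G_successors:
  assumes "in_class_G V r t0 t1 e0 e1 L" and "v \<in> V" and "v \<notin> {t0, t1}"
    and "w \<in> {e0 v, e1 v}"
  shows "w \<in> V" and "(v, w) \<in> edges V t0 t1 e0 e1" and "L v < L w"
proof -
  show edge: "(v, w) \<in> edges V t0 t1 e0 e1"
    using assms(2-4) by (auto simp: edges_def)
  show "w \<in> V" using edge in_class_G_edges_subset[OF assms(1)] by blast
  have "\<forall>(u, w) \<in> edges V t0 t1 e0 e1. L u < L w"
    using assms(1) by (simp add: in_class_G_def)
  with edge show "L v < L w" by blast
qed

lemma in_class_G_level_le_terminal: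
  assumes G: "in_class_G V r t0 t1 e0 e1 L" and "v \<in> V"
  shows "L v \<le> L t0"
proof -
  let ?E = "edges V t0 t1 e0 e1"
  have "finite ?E"
    using finite_subset[OF in_class_G_edges_subset[OF G]] G by (simp add: in_class_G_def)
  moreover have "acyclic ?E" using G by (simp add: in_class_G_def)
  ultimately have "wf (?E\<inverse>)" by (rule finite_acyclic_wf_converse)
  then show ?thesis using \<open>v \<in> V\<close>
  proof (induction v rule: wf_induct_rule)
    case (less v)
    show ?case
    proof (cases "v \<in> {t0, t1}")
      case True
      moreover have "L t1 = L t0" using G by (simp add: in_class_G_def)
      ultimately show ?thesis by auto
    next
      case False
      note succ = in_class_G_successors[OF G less.prems False, of "e0 v"]
      have "L (e0 v) \<le> L t0" using less.IH succ(1,2) by blast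
      with succ(3) show ?thesis by simp
    qed
  qed
qed

lemma length_phi_fuel:
  assumes G: "in_class_G V r t0 t1 e0 e1 L" and terminal_level: "L t0 = k + 1"
  shows "v \<in> V \<Longrightarrow> card ((edges V t0 t1 e0 e1)\<^sup>* `` {v}) \<le> n \<Longrightarrow>
    length (phi_fuel n t0 t1 e0 e1 L v) = 2 ^ (k + 1 - L v)"
proof (induction n arbitrary: v)
  case 0
  then show ?case using in_class_G_reachable_finite[OF G] by (auto simp: card_eq_0_iff)
next
  case (Suc m v)
  let ?E = "edges V t0 t1 e0 e1"
  show ?case
  proof (cases "v \<in> {t0, t1}")
    case True
    moreover have "L t1 = L t0" using G by (simp add: in_class_G_def)
    ultimately show ?thesis using terminal_level by auto
  next
    case False
    have succ_length: "length (phi_fuel m t0 t1 e0 e1 L w) = 2 ^ (k + 1 - L w)"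
      and succ_level: "L v < L w" "L w \<le> k + 1"
      if "w \<in> {e0 v, e1 v}" for w
    proof -
      note succ = in_class_G_successors[OF G Suc.prems(1) False that]
      have "acyclic ?E" using G by (simp add: in_class_G_def)
      from in_class_G_reachable_finite[OF G Suc.prems(1)] this succ(2)
      have "card (?E\<^sup>* `` {w}) < card (?E\<^sup>* `` {v})"
        by (rule card_rtrancl_Image_less)
      then show "length (phi_fuel m t0 t1 e0 e1 L w) = 2 ^ (k + 1 - L w)"
        using Suc.IH[OF succ(1)] Suc.prems(2) by simp
      show "L v < L w" using succ(3) .
      show "L w \<le> k + 1"
        using in_class_G_level_le_terminal[OF G succ(1)] terminal_level by simp
    qed
    have block: "2 ^ (L w - L v - 1) * 2 ^ (k + 1 - L w) = (2::nat) ^ (k - L v)"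
      if "w \<in> {e0 v, e1 v}" for w
    proof -
      have "L w - L v - 1 + (k + 1 - L w) = k - L v"
        using succ_level[OF that] by arith
      then show ?thesis by (metis power_add)
    qed
    have "length (phi_fuel (Suc m) t0 t1 e0 e1 L v)
        = 2 ^ (L (e0 v) - L v - 1) * 2 ^ (k + 1 - L (e0 v))
          + 2 ^ (L (e1 v) - L v - 1) * 2 ^ (k + 1 - L (e1 v))"
      using False succ_length by (simp add: length_concat sum_list_replicate)
    also have "\<dots> = 2 * 2 ^ (k - L v)" using block by simp
    also have "\<dots> = 2 ^ (k + 1 - L v)"
      using succ_level[of "e0 v"] by (simp flip: power_Suc add: Suc_diff_le)
    finally show ?thesis .
  qed
qed

theorem lemma1:
  fixes V :: "'v set" and r t0 t1 :: 'v and e0 e1 :: "'v \<Rightarrow> 'v" and L :: "'v \<Rightarrow> nat" and k :: nat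
  assumes "in_class_G V r t0 t1 e0 e1 L"
    and "0 < k"
    and "L t0 = k + 1" and "L t1 = k + 1"
  shows "(\<forall>v \<in> V. length (phi V t0 t1 e0 e1 L v) = 2 ^ (k + 1 - L v))
         \<and> length (phi V t0 t1 e0 e1 L r) = 2 ^ k"
proof -
  have "\<forall>v \<in> V. length (phi V t0 t1 e0 e1 L v) = 2 ^ (k + 1 - L v)"
    using length_phi_fuel[OF assms(1,3)] in_class_G_reachable_card_le[OF assms(1)]
    by (simp add: phi_def)
  moreover have "r \<in> V" and "L r = 1" using assms(1) by (simp_all add: in_class_G_def)
  ultimately show ?thesis by simp
qed

end
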